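(* Let $d=2$ and assume the polynomial degree satisfies $1\le M\le 13$. There exist constants $c_1>0$, $c_2>0$ independent of $h$ such that for every interface $\Gamma^{k,\ell}$ and every $\eta_{\ell,k}\in\mathcal Y_h^{\ell,k}\cap H^1_0(\Gamma^{k,\ell})$ there exists $\psi_{\ell,k}\in\tilde W_h^{\ell,k}$ with $$\int_{\Gamma^{k,\ell}}\big(\eta_{\ell,k}+\pi_{k,\ell}(\eta_{\ell,k})\big)\psi_{\ell,k}\ge c_1\|\eta_{\ell,k}\|^2_{L^2(\Gamma^{k,\ell})},\qquad \|\psi_{\ell,k}\|_{L^2(\Gamma^{k,\ell})}\le c_2\|\eta_{\ell,k}\|_{L^2(\Gamma^{k,\ell})}.$$
   Context: $\Omega\subset\mathbb R^2$ is decomposed into non-overlapping geometrically conforming subdomains $\Omega^k$; $\Gamma^{k,\ell}=\partial\Omega^k\cap\partial\Omega^\ell$ is a common edge. Each $\Omega^k$ has its own uniformly regular triangular mesh $\mathcal T_h^k$ ($h_T/\rho_T\le\sigma$, $\tau h\le h_T$ with $\sigma,\tau$ independent of $h$, $h$ the maximal element diameter), possibly non-matching across interfaces. $Y_h^k$ = continuous piecewise $\mathcal P_M$ functions on $\mathcal T_h^k$; $\mathcal Y_h^{k,\ell}$ is the space of traces on $\Gamma^{k,\ell}$ of $Y_h^k$ (a 1D finite element space on the induced mesh with consecutive vertices $x_0,\dots,x_n$, $x_0,x_n$ the endpoints of $\Gamma^{k,\ell}$); $\tilde W_h^{k,\ell}$ is the subspace of $\mathcal Y_h^{k,\ell}$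 of functions that are polynomials of degree $\le M-1$ on $[x_0,x_1]$ and $[x_{n-1},x_n]$. $\mathcal Y_h^{\ell,k},\tilde W_h^{\ell,k}$ are the analogous spaces built from the mesh of $\Omega^\ell$. $\pi_{k,\ell}$ is the $L^2(\Gamma^{k,\ell})$-orthogonal projection onto $\tilde W_h^{k,\ell}$. *)

theory Defs
  imports "HOL-Analysis.Analysis" "HOL-Computational_Algebra.Polynomial"
begin

text \<open>The interface Gamma is identified (by arc length) with the interval [a,b].
  Quasi-uniformity inherited from the 2D shape-regular, quasi-uniform meshes:
  every trace element has length between theta*h and h.\<close>

definition mesh1d :: "real \<Rightarrow> real \<Rightarrow> real \<Rightarrow> real \<Rightarrow> nat \<Rightarrow> (nat \<Rightarrow> real) \<Rightarrow> bool" where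
  "mesh1d a b h \<theta> n x \<longleftrightarrow> 0 < h \<and> 1 \<le> n \<and> x 0 = a \<and> x n = b \<and>
     (\<forall>i<n. \<theta> * h \<le> x (Suc i) - x i \<and> x (Suc i) - x i \<le> h)"

text \<open>Trace space: continuous piecewise polynomials of degree at most M on the mesh
  (continuity is automatic since the pieces are taken on closed subintervals);
  functions are normalised to be 0 outside [a,b].\<close>

definition Ysp :: "real \<Rightarrow> real \<Rightarrow> nat \<Rightarrow> (nat \<Rightarrow> real) \<Rightarrow> nat \<Rightarrow> (real \<Rightarrow> real) set" where
  "Ysp a b n x M = {f. (\<forall>t. t \<notin> {a..b} \<longrightarrow> f t = 0) \<and>
     (\<forall>i<n. \<exists>p::real poly. degree p \<le> M \<and> (\<forall>t\<in>{x i..x (Suc i)}. f t = poly p t))}"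

definition Wt :: "real \<Rightarrow> real \<Rightarrow> nat \<Rightarrow> (nat \<Rightarrow> real) \<Rightarrow> nat \<Rightarrow> (real \<Rightarrow> real) set" where
  "Wt a b n x M = {f \<in> Ysp a b n x M.
     (\<exists>p::real poly. degree p \<le> M - 1 \<and> (\<forall>t\<in>{x 0..x 1}. f t = poly p t)) \<and>
     (\<exists>q::real poly. degree q \<le> M - 1 \<and> (\<forall>t\<in>{x (n - 1)..x n}. f t = poly q t))}"

definition L2ip :: "real \<Rightarrow> real \<Rightarrow> (real \<Rightarrow> real) \<Rightarrow> (real \<Rightarrow> real) \<Rightarrow> real" where
  "L2ip a b f g = integral {a..b} (\<lambda>t. f t * g t)"

definition L2norm :: "real \<Rightarrow> real \<Rightarrow> (real \<Rightarrow> real) \<Rightarrow> real" where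
  "L2norm a b f = sqrt (L2ip a b f f)"

definition L2proj :: "real \<Rightarrow> real \<Rightarrow> nat \<Rightarrow> (nat \<Rightarrow> real) \<Rightarrow> nat \<Rightarrow> (real \<Rightarrow> real) \<Rightarrow> (real \<Rightarrow> real)" where
  "L2proj a b n x M f = (THE w. w \<in> Wt a b n x M \<and>
      (\<forall>v\<in>Wt a b n x M. L2ip a b (\<lambda>t. f t - w t) v = 0))"

end

theory Submission
  imports Defs "HOL-Library.Function_Algebras"
begin

text \<open>Write w for the L2 projection of eta. Since <eta - w, w> = 0, Young's inequality gives
  <eta + w, psi> \<ge> 3/2 <eta,psi> - 5/4 |eta|^2 - |psi|^2/20 for every psi, so it suffices to find
  psi in the modified space with 3/2 <eta,psi> - 5/4 |eta|^2 - |psi|^2/20 \<ge> |eta|^2/100 and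
  |psi| \<le> 9 |eta|.  Take psi = eta except on the first and last element of the mesh, where eta
  vanishes at the end point of the interface and is replaced by a polynomial of degree M - 1
  with the same value at the interior node.  On the reference element [0,1], with P(0) = 0,
  write P = U + A l with l the shifted Legendre polynomial of degree M and deg U < M, and put
  Psi = U + (A/M) k, where k reproduces point evaluation at 0 on polynomials of degree below M
  (up to the sign (-1)^(M-1)).  Orthogonality of l to U, together with U(0) = -(-1)^M A, gives
  all integrals in closed form in terms of |U|^2, A^2 and M, and the required inequalities
  reduce to two elementary inequalities in M that hold for M \<le> 13.  Affine maps transport the
  local estimate to the actual elements, and on interior elements psi = eta.\<close>

section \<open>Reference polynomials on [0,1]\<close>

text \<open>Row M of the two tables lists the coefficients, from degree 0 upwards, of the shifted
  Legendre polynomial of degree M on [0,1], namely (-1)^(M+k) * (M choose k) * ((M+k) choose k),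
  and of (-1)^(M-1) times the reproducing kernel of evaluation at 0 in the polynomials of degree
  below M, namely (-1)^(M-1+k) * M * (M choose (k+1)) * ((M+k) choose k).  The facts about them
  used below are checked by evaluation, which is where the bound M \<le> 13 enters.\<close>

definition legendre_table :: "int list list" where
  "legendre_table = [[1],
   [-1, 2],
   [1, -6, 6],
   [-1, 12, -30, 20],
   [1, -20, 90, -140, 70],
   [-1, 30, -210, 560, -630, 252],
   [1, -42, 420, -1680, 3150, -2772, 924],
   [-1, 56, -756, 4200, -11550, 16632, -12012, 3432],
   [1, -72, 1260, -9240, 34650, -72072, 84084, -51480, 12870],
   [-1, 90, -1980, 18480, -90090, 252252, -420420, 411840, -218790, 48620],
   [1, -110, 2970, -34320, 210210, -756756, 1681680, -2333760, 1969110, -923780, 184756],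
   [-1, 132, -4290, 60060, -450450, 2018016, -5717712, 10501920, -12471030, 9237800, -3879876, 705432],
   [1, -156, 6006, -100100, 900900, -4900896, 17153136, -39907296, 62355150, -64664600, 42678636, -16224936, 2704156],
   [-1, 182, -8190, 160160, -1701700, 11027016, -46558512, 133024320, -261891630, 355655300, -327202876, 194699232, -67603900, 10400600]]"

definition kernel_table :: "int list list" where
  "kernel_table = [[], [1],
   [-4, 6],
   [9, -36, 30],
   [-16, 120, -240, 140],
   [25, -300, 1050, -1400, 630],
   [-36, 630, -3360, 7560, -7560, 2772],
   [49, -1176, 8820, -29400, 48510, -38808, 12012],
   [-64, 2016, -20160, 92400, -221760, 288288, -192192, 51480],
   [81, -3240, 41580, -249480, 810810, -1513512, 1621620, -926640, 218790],
   [-100, 4950, -79200, 600600, -2522520, 6306300, -9609600, 8751600, -4375800, 923780],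
   [121, -7260, 141570, -1321320, 6936930, -22198176, 44924880, -57760560, 45727110, -20323160, 3879876],
   [-144, 10296, -240240, 2702700, -17297280, 68612544, -176432256, 299304720, -332560800, 232792560, -93117024, 16224936],
   [169, -14196, 390390, -5205200, 39819780, -191134944, 605260656, -1296987120, 1891439550, -1849407560, 1160082924, -421848336, 67603900]]"

definition moment :: "int list \<Rightarrow> nat \<Rightarrow> rat" where
  "moment c j = (\<Sum>k<length c. of_int (c!k) / of_nat (k + j + 1))"

definition tables_valid :: "nat \<Rightarrow> bool" where
  "tables_valid M \<longleftrightarrow>
    length (legendre_table!M) = M + 1 \<and> length (kernel_table!M) = M \<and> legendre_table!M!M \<noteq> 0 \<and>
    sum_list (legendre_table!M) = 1 \<and> legendre_table!M!0 = (-1)^M \<and>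
    sum_list (kernel_table!M) = int M \<and> kernel_table!M!0 = (-1)^(M-1) * int M^2 \<and>
    (\<forall>j<M. moment (legendre_table!M) j = 0) \<and>
    moment (legendre_table!M) M * of_int (legendre_table!M!M) = 1 / (2 * of_nat M + 1) \<and>
    (\<forall>j<M. moment (kernel_table!M) j = (if j = 0 then (-1)^(M-1) else 0))"

lemma tables_valid_upto_13: "list_all tables_valid [1..<14]"
  by code_simp

lemma tables_valid:
  assumes "1 \<le> M" "M \<le> 13"
  shows "tables_valid M"
  using tables_valid_upto_13 assms by (simp add: list_all_iff)

lemma has_integral_power_01: "((\<lambda>s::real. s ^ n) has_integral 1 / (real n + 1)) {0..1}"
proof -
  have "((\<lambda>s::real. s ^ n) has_integral (1 ^ Suc n / Suc n - 0 ^ Suc n / Suc n)) {0..1}"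
  proof (rule fundamental_theorem_of_calculus)
    fix s :: real
    have "DERIV (\<lambda>s. s ^ Suc n / Suc n) s :> s ^ n"
      by (intro derivative_eq_intros) auto
    thus "((\<lambda>s. s ^ Suc n / Suc n) has_vector_derivative s ^ n) (at s within {0..1})"
      by (simp add: has_field_derivative_at_within flip: has_real_derivative_iff_has_vector_derivative)
  qed simp
  thus ?thesis by (simp add: add.commute)
qed

lemma poly_eq_sum_lessThan:
  fixes p :: "'a::comm_semiring_1 poly"
  assumes "degree p < N"
  shows "poly p s = (\<Sum>k<N. coeff p k * s ^ k)"
proof -
  have "poly p s = (\<Sum>k\<le>degree p. coeff p k * s ^ k)" by (rule poly_altdef)
  also have "\<dots> = (\<Sum>k<N. coeff p k * s ^ k)"
    by (rule sum.mono_neutral_left) (use assms in \<open>auto simp: coeff_eq_0\<close>)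
  finally show ?thesis .
qed

lemma has_integral_poly_mult_power:
  fixes p :: "real poly"
  assumes "degree p < N"
  shows "((\<lambda>s. poly p s * s ^ j) has_integral (\<Sum>k<N. coeff p k / (real k + real j + 1))) {0..1}"
proof -
  have "((\<lambda>s. \<Sum>k<N. coeff p k * s ^ (k + j)) has_integral (\<Sum>k<N. coeff p k * (1 / (real (k + j) + 1)))) {0..1}"
    by (intro has_integral_sum has_integral_mult_right has_integral_power_01) auto
  moreover have "(\<lambda>s. poly p s * s ^ j) = (\<lambda>s. \<Sum>k<N. coeff p k * s ^ (k + j))"
    using poly_eq_sum_lessThan[OF assms] by (auto simp: sum_distrib_right power_add mult.assoc)
  ultimately show ?thesis by (simp add: add.assoc)
qed

lemma has_integral_poly_mult_poly:
  fixes p q :: "real poly"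
  assumes "degree q < N" and "\<And>j. j < N \<Longrightarrow> ((\<lambda>s. poly p s * s ^ j) has_integral v j) {0..1}"
  shows "((\<lambda>s. poly p s * poly q s) has_integral (\<Sum>j<N. coeff q j * v j)) {0..1}"
proof -
  have "(\<lambda>s. poly p s * poly q s) = (\<lambda>s. \<Sum>j<N. coeff q j * (poly p s * s ^ j))"
    using poly_eq_sum_lessThan[OF assms(1)] by (auto simp: sum_distrib_left algebra_simps)
  thus ?thesis by (simp only:) (intro has_integral_sum has_integral_mult_right assms(2); simp)
qed

lemma poly_Poly_1: "poly (Poly xs) (1::'a::comm_semiring_1) = sum_list xs"
  by (induction xs) auto

lemma has_integral_Poly_mult_power:
  "((\<lambda>s. poly (Poly (map real_of_int c)) s * s ^ j) has_integral real_of_rat (moment c j)) {0..1}"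
proof (cases "c = []")
  case True thus ?thesis by (simp add: moment_def)
next
  case False
  have "degree (Poly (map real_of_int c)) \<le> length c - 1"
    by (rule degree_le) (auto simp: nth_default_def)
  hence "degree (Poly (map real_of_int c)) < length c" using False by (cases c) auto
  from has_integral_poly_mult_power[OF this, of j] show ?thesis
    by (simp add: moment_def of_rat_sum of_rat_divide of_rat_add add_ac nth_default_def)
qed

definition legendre01 :: "nat \<Rightarrow> real poly" where
  "legendre01 M = Poly (map of_int (legendre_table!M))"

definition kernel01 :: "nat \<Rightarrow> real poly" where
  "kernel01 M = Poly (map of_int (kernel_table!M))"

context
  fixes M :: nat
  assumes M: "1 \<le> M" "M \<le> 13"
begin

private lemma table_facts:
  "length (legendre_table!M) = M + 1" "length (kernel_table!M) = M" "legendre_table!M!M \<noteq> 0"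
  "sum_list (legendre_table!M) = 1" "legendre_table!M!0 = (-1)^M"
  "sum_list (kernel_table!M) = int M" "kernel_table!M!0 = (-1)^(M-1) * int M^2"
  "\<And>j. j < M \<Longrightarrow> moment (legendre_table!M) j = 0"
  "moment (legendre_table!M) M * of_int (legendre_table!M!M) = 1 / (2 * of_nat M + 1)"
  "\<And>j. j < M \<Longrightarrow> moment (kernel_table!M) j = (if j = 0 then (-1)^(M-1) else 0)"
  using tables_valid[OF M] unfolding tables_valid_def by blast+

lemma coeff_legendre01: "coeff (legendre01 M) k = (if k \<le> M then real_of_int (legendre_table!M!k) else 0)"
  using table_facts(1) by (auto simp: legendre01_def nth_default_def)

lemma coeff_kernel01: "coeff (kernel01 M) k = (if k < M then real_of_int (kernel_table!M!k) else 0)"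
  using table_facts(2) by (auto simp: kernel01_def nth_default_def)

lemma lead_coeff_legendre01_nonzero: "coeff (legendre01 M) M \<noteq> 0"
  using table_facts(3) by (simp add: coeff_legendre01)

lemma degree_legendre01: "degree (legendre01 M) = M"
proof (rule antisym)
  show "degree (legendre01 M) \<le> M" by (rule degree_le) (simp add: coeff_legendre01)
  show "M \<le> degree (legendre01 M)" by (rule le_degree[OF lead_coeff_legendre01_nonzero])
qed

lemma degree_kernel01: "degree (kernel01 M) < M"
proof -
  have "degree (kernel01 M) \<le> M - 1" by (rule degree_le) (auto simp: coeff_kernel01)
  thus ?thesis using M by linarith
qed

lemma poly_legendre01_1: "poly (legendre01 M) 1 = 1"
  using table_facts(4) unfolding legendre01_def poly_Poly_1 by (simp add: sum_list_of_int)

lemma poly_legendre01_0: "poly (legendre01 M) 0 = (-1) ^ M"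
  using table_facts(5) by (simp add: poly_0_coeff_0 coeff_legendre01)

lemma poly_kernel01_1: "poly (kernel01 M) 1 = real M"
  using table_facts(6) unfolding kernel01_def poly_Poly_1 by (simp add: sum_list_of_int)

private lemma has_integral_legendre01_mult_power:
  "((\<lambda>s. poly (legendre01 M) s * s ^ j) has_integral real_of_rat (moment (legendre_table!M) j)) {0..1}"
  unfolding legendre01_def by (rule has_integral_Poly_mult_power)

private lemma has_integral_kernel01_mult_power:
  "((\<lambda>s. poly (kernel01 M) s * s ^ j) has_integral real_of_rat (moment (kernel_table!M) j)) {0..1}"
  unfolding kernel01_def by (rule has_integral_Poly_mult_power)

lemma legendre01_orthogonal:
  assumes "degree Q < M"
  shows "((\<lambda>s. poly (legendre01 M) s * poly Q s) has_integral 0) {0..1}"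
proof -
  have "((\<lambda>s. poly (legendre01 M) s * poly Q s) has_integral (\<Sum>j<M. coeff Q j * 0)) {0..1}"
  proof (rule has_integral_poly_mult_poly[OF assms])
    fix j assume "j < M"
    thus "((\<lambda>s. poly (legendre01 M) s * s ^ j) has_integral 0) {0..1}"
      using has_integral_legendre01_mult_power[of j] table_facts(8) by simp
  qed
  thus ?thesis by simp
qed

lemma has_integral_legendre01_square:
  "((\<lambda>s. poly (legendre01 M) s * poly (legendre01 M) s) has_integral 1 / (2 * real M + 1)) {0..1}"
proof -
  let ?m = "\<lambda>j. real_of_rat (moment (legendre_table!M) j)"
  have "((\<lambda>s. poly (legendre01 M) s * poly (legendre01 M) s) has_integral
      (\<Sum>j<Suc M. coeff (legendre01 M) j * ?m j)) {0..1}"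
    by (intro has_integral_poly_mult_poly has_integral_legendre01_mult_power) (simp add: degree_legendre01)
  also have "(\<Sum>j<Suc M. coeff (legendre01 M) j * ?m j) = coeff (legendre01 M) M * ?m M"
    using table_facts(8) by simp
  also have "\<dots> = 1 / (2 * real M + 1)"
    using arg_cong[OF table_facts(9), of real_of_rat]
    by (simp add: coeff_legendre01 of_rat_mult of_rat_divide of_rat_add mult.commute)
  finally show ?thesis .
qed

lemma kernel01_reproducing:
  assumes "degree Q < M"
  shows "((\<lambda>s. poly (kernel01 M) s * poly Q s) has_integral (-1) ^ (M - 1) * poly Q 0) {0..1}"
proof -
  have "((\<lambda>s. poly (kernel01 M) s * poly Q s) has_integral
     (\<Sum>j<M. coeff Q j * (if j = 0 then (-1) ^ (M - 1) else 0))) {0..1}"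
  proof (rule has_integral_poly_mult_poly[OF assms])
    fix j assume "j < M"
    thus "((\<lambda>s. poly (kernel01 M) s * s ^ j) has_integral (if j = 0 then (-1) ^ (M - 1) else 0)) {0..1}"
      using has_integral_kernel01_mult_power[of j] table_facts(10)[of j] by (cases "j = 0") (simp_all add: of_rat_power)
  qed
  also have "(\<Sum>j<M. coeff Q j * (if j = 0 then (-1) ^ (M - 1) else 0)) = coeff Q 0 * (-1) ^ (M - 1)"
    using M by (simp add: if_distrib sum.delta cong: if_cong)
  finally show ?thesis by (simp add: poly_0_coeff_0 mult.commute)
qed

lemma has_integral_kernel01_square:
  "((\<lambda>s. poly (kernel01 M) s * poly (kernel01 M) s) has_integral (real M)\<^sup>2) {0..1}"
proof -
  have "((\<lambda>s. poly (kernel01 M) s * poly (kernel01 M) s) has_integral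
      (-1) ^ (M - 1) * poly (kernel01 M) 0) {0..1}"
    by (rule kernel01_reproducing[OF degree_kernel01])
  also have "(-1) ^ (M - 1) * poly (kernel01 M) 0 = ((-1) ^ (M - 1) * (-1) ^ (M - 1)) * (real M)\<^sup>2"
    using table_facts(7) by (simp add: poly_0_coeff_0 coeff_kernel01 M)
  also have "\<dots> = (real M)\<^sup>2"
    by (simp flip: power_add)
  finally show ?thesis .
qed

end

section \<open>Good test functions\<close>

lemma L2ip_commute: "L2ip a b f g = L2ip a b g f"
  unfolding L2ip_def by (simp add: mult.commute)

lemma L2ip_self_nonneg: "0 \<le> L2ip a b f f"
  unfolding L2ip_def
  by (cases "(\<lambda>t. f t * f t) integrable_on {a..b}") (auto intro: integral_nonneg simp: not_integrable_integral)

lemma L2ip_combine: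
  assumes "(\<lambda>t. f t * g t) integrable_on {c..d}" "c \<le> e" "e \<le> d"
  shows "L2ip c d f g = L2ip c e f g + L2ip e d f g"
  unfolding L2ip_def using Henstock_Kurzweil_Integration.integral_combine[OF assms(2,3,1)] by simp

lemma L2ip_cong:
  assumes "\<And>t. t \<in> {a..b} \<Longrightarrow> f t = f' t" "\<And>t. t \<in> {a..b} \<Longrightarrow> g t = g' t"
  shows "L2ip a b f g = L2ip a b f' g'"
  unfolding L2ip_def using assms by (intro integral_cong) auto

text \<open>Against the lower bound of L2ip_plus_projection_lower_bound, the constant
  63/50 = 5/4 + 1/100 leaves the margin |eta|^2/100.\<close>

definition good_test_on :: "real \<Rightarrow> real \<Rightarrow> (real \<Rightarrow> real) \<Rightarrow> (real \<Rightarrow> real) \<Rightarrow> bool" where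
  "good_test_on c d \<eta> \<psi> \<longleftrightarrow>
     63/50 * L2ip c d \<eta> \<eta> \<le> 3/2 * L2ip c d \<eta> \<psi> - L2ip c d \<psi> \<psi> / 20 \<and>
     L2ip c d \<psi> \<psi> \<le> 81 * L2ip c d \<eta> \<eta>"

lemma good_test_on_refl: "good_test_on c d \<eta> \<eta>"
  using L2ip_self_nonneg[of c d \<eta>] by (simp add: good_test_on_def)

lemma good_test_on_cong:
  assumes "\<And>t. t \<in> {c..d} \<Longrightarrow> \<eta> t = \<eta>' t" "\<And>t. t \<in> {c..d} \<Longrightarrow> \<psi> t = \<psi>' t"
  shows "good_test_on c d \<eta> \<psi> \<longleftrightarrow> good_test_on c d \<eta>' \<psi>'"
  unfolding good_test_on_def using L2ip_cong[OF assms(1,1)] L2ip_cong[OF assms(1,2)] L2ip_cong[OF assms(2,2)]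
  by presburger

lemma good_test_on_combine:
  assumes "continuous_on {c..d} \<eta>" "continuous_on {c..d} \<psi>" "c \<le> e" "e \<le> d"
    and "good_test_on c e \<eta> \<psi>" "good_test_on e d \<eta> \<psi>"
  shows "good_test_on c d \<eta> \<psi>"
proof -
  have split: "L2ip c d f g = L2ip c e f g + L2ip e d f g"
    if "continuous_on {c..d} f" "continuous_on {c..d} g" for f g
    using that assms(3,4) by (intro L2ip_combine integrable_continuous_interval continuous_intros)
  show ?thesis
    using assms(5,6) split[OF assms(1,1)] split[OF assms(1,2)] split[OF assms(2,2)]
    unfolding good_test_on_def by linarith
qed

lemma has_integral_affine_01:
  fixes G :: "real \<Rightarrow> real"
  assumes G: "(G has_integral v) {0..1}" and "c < d" and ends: "(eo = c \<and> ei = d) \<or> (eo = d \<and> ei = c)"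
  shows "((\<lambda>t. G ((t - eo) / (ei - eo))) has_integral (d - c) * v) {c..d}"
proof -
  have io: "ei - eo \<noteq> 0" using ends \<open>c < d\<close> by auto
  define m where "m = 1 / (ei - eo)"
  define k where "k = - eo / (ei - eo)"
  have "((\<lambda>x. G (m * x + k)) has_integral (1 / \<bar>m\<bar>) *\<^sub>R v) ((\<lambda>x. x / m - k / m) ` {0..1})"
    using io by (intro has_integral_affinity01[OF G]) (simp add: m_def)
  moreover have "(\<lambda>x. G (m * x + k)) = (\<lambda>t. G ((t - eo) / (ei - eo)))"
    unfolding m_def k_def by (auto simp: fun_eq_iff diff_divide_distrib)
  moreover have "(\<lambda>x. x / m - k / m) ` {0..1} = {c..d}"
    unfolding image_affinity_atLeastAtMost_div_diff using ends \<open>c < d\<close> io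
    by (auto simp: m_def k_def field_simps)
  moreover have "(1 / \<bar>m\<bar>) *\<^sub>R v = (d - c) * v"
    using ends \<open>c < d\<close> by (auto simp: m_def)
  ultimately show ?thesis by simp
qed

lemma good_test_on_affine:
  assumes "continuous_on {0..1} \<eta>" "continuous_on {0..1} \<psi>" "good_test_on 0 1 \<eta> \<psi>"
    and "c < d" "(eo = c \<and> ei = d) \<or> (eo = d \<and> ei = c)"
  shows "good_test_on c d (\<lambda>t. \<eta> ((t - eo) / (ei - eo))) (\<lambda>t. \<psi> ((t - eo) / (ei - eo)))"
proof -
  have scale: "L2ip c d (\<lambda>t. f ((t - eo) / (ei - eo))) (\<lambda>t. g ((t - eo) / (ei - eo))) = (d - c) * L2ip 0 1 f g"
    if "continuous_on {0..1} f" "continuous_on {0..1} g" for f g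
  proof -
    have "((\<lambda>s. f s * g s) has_integral L2ip 0 1 f g) {0..1}"
      unfolding L2ip_def using that by (intro integrable_integral integrable_continuous_interval continuous_intros)
    from has_integral_affine_01[OF this assms(4,5)] show ?thesis
      unfolding L2ip_def by (rule integral_unique)
  qed
  have "(d - c) * (63/50 * L2ip 0 1 \<eta> \<eta>) \<le> (d - c) * (3/2 * L2ip 0 1 \<eta> \<psi> - L2ip 0 1 \<psi> \<psi> / 20)"
    "(d - c) * L2ip 0 1 \<psi> \<psi> \<le> (d - c) * (81 * L2ip 0 1 \<eta> \<eta>)"
    using assms(3,4) unfolding good_test_on_def by (intro mult_left_mono; simp)+
  thus ?thesis
    unfolding good_test_on_def scale[OF assms(1,1)] scale[OF assms(1,2)] scale[OF assms(2,2)]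
    by (simp add: algebra_simps)
qed

section \<open>Correction on a single element\<close>

lemma reference_correction_constants:
  fixes m :: real
  assumes "1 \<le> m" "m \<le> 13"
  shows "63/50 * (1 / (2 * m + 1)) + 1/20 \<le> 7/5 * (1 / m)" and "1 + 2 * (1 / m) \<le> 81 * (1 / (2 * m + 1))"
proof -
  have "1 / (2 * m + 1) \<le> 1 / (2 * m)" using assms by (intro divide_left_mono) auto
  moreover have "1 / (2 * m) = 1/2 * (1 / m)" "1/20 \<le> 77/100 * (1 / m)" using assms by simp_all
  ultimately show "63/50 * (1 / (2 * m + 1)) + 1/20 \<le> 7/5 * (1 / m)" by linarith
  have "m * m \<le> 13 * m" using assms by (simp add: mult_right_mono)
  moreover have "m * (m * 2) = 2 * (m * m)" by simp
  ultimately have "2 + m * (m * 2) \<le> m * 76" using assms by linarith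
  thus "1 + 2 * (1 / m) \<le> 81 * (1 / (2 * m + 1))" using assms by (simp add: field_simps)
qed

lemma reference_correction_L2ip:
  fixes U :: "real poly"
  assumes M: "1 \<le> M" "M \<le> 13" and dU: "degree U < M" and U0: "poly U 0 = - A * (-1) ^ M"
  defines "P \<equiv> U + smult A (legendre01 M)" and "\<Psi> \<equiv> U + smult (A / real M) (kernel01 M)"
  shows "L2ip 0 1 (poly P) (poly P) = L2ip 0 1 (poly U) (poly U) + A\<^sup>2 / (2 * real M + 1)"
    and "L2ip 0 1 (poly P) (poly \<Psi>) = L2ip 0 1 (poly U) (poly U) + A\<^sup>2 / real M"
    and "L2ip 0 1 (poly \<Psi>) (poly \<Psi>) = L2ip 0 1 (poly U) (poly U) + 2 * A\<^sup>2 / real M + A\<^sup>2"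
proof -
  let ?l = "legendre01 M" and ?k = "kernel01 M" and ?u = "L2ip 0 1 (poly U) (poly U)"
  have uU: "((\<lambda>s. poly U s * poly U s) has_integral ?u) {0..1}"
    unfolding L2ip_def by (intro integrable_integral integrable_continuous_interval continuous_intros)
  have lU: "((\<lambda>s. poly ?l s * poly U s) has_integral 0) {0..1}"
    and lk: "((\<lambda>s. poly ?l s * poly ?k s) has_integral 0) {0..1}"
    by (intro legendre01_orthogonal M dU degree_kernel01)+
  have "(-1::real) ^ (M - 1) * (-1) ^ M = (-1) ^ Suc (2 * (M - 1))"
    using M by (simp flip: power_add)
  hence kU: "((\<lambda>s. poly ?k s * poly U s) has_integral A) {0..1}"
    using kernel01_reproducing[OF M dU] U0 by (simp add: algebra_simps)
  have ll: "((\<lambda>s. poly ?l s * poly ?l s) has_integral 1 / (2 * real M + 1)) {0..1}"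
    and kk: "((\<lambda>s. poly ?k s * poly ?k s) has_integral (real M)\<^sup>2) {0..1}"
    by (intro has_integral_legendre01_square has_integral_kernel01_square M)+
  have "((\<lambda>s. poly U s * poly U s + 2 * A * (poly ?l s * poly U s) + A\<^sup>2 * (poly ?l s * poly ?l s))
      has_integral ?u + 2 * A * 0 + A\<^sup>2 * (1 / (2 * real M + 1))) {0..1}"
    by (intro has_integral_add has_integral_mult_right uU lU ll)
  thus "L2ip 0 1 (poly P) (poly P) = ?u + A\<^sup>2 / (2 * real M + 1)"
    unfolding L2ip_def by (intro integral_unique) (simp add: P_def algebra_simps power2_eq_square)
  have "((\<lambda>s. poly U s * poly U s + A / real M * (poly ?k s * poly U s) + A * (poly ?l s * poly U s)
      + A * A / real M * (poly ?l s * poly ?k s)) has_integral ?u + A / real M * A + A * 0 + A * A / real M * 0) {0..1}"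
    by (intro has_integral_add has_integral_mult_right uU kU lU lk)
  thus "L2ip 0 1 (poly P) (poly \<Psi>) = ?u + A\<^sup>2 / real M"
    unfolding L2ip_def by (intro integral_unique) (simp add: P_def \<Psi>_def algebra_simps power2_eq_square)
  have "((\<lambda>s. poly U s * poly U s + 2 * A / real M * (poly ?k s * poly U s) + (A / real M)\<^sup>2 * (poly ?k s * poly ?k s))
      has_integral ?u + 2 * A / real M * A + (A / real M)\<^sup>2 * (real M)\<^sup>2) {0..1}"
    by (intro has_integral_add has_integral_mult_right uU kU kk)
  thus "L2ip 0 1 (poly \<Psi>) (poly \<Psi>) = ?u + 2 * A\<^sup>2 / real M + A\<^sup>2"
    unfolding L2ip_def using M by (intro integral_unique) (simp add: \<Psi>_def algebra_simps power2_eq_square)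
qed

lemma reference_correction:
  fixes P :: "real poly"
  assumes M: "1 \<le> M" "M \<le> 13" and "degree P \<le> M" and "poly P 0 = 0"
  shows "\<exists>\<Psi>. degree \<Psi> < M \<and> poly \<Psi> 1 = poly P 1 \<and> good_test_on 0 1 (poly P) (poly \<Psi>)"
proof -
  let ?l = "legendre01 M" and ?k = "kernel01 M"
  define A where "A = coeff P M / coeff ?l M"
  define U where "U = P - smult A ?l"
  define \<Psi> where "\<Psi> = U + smult (A / real M) ?k"
  have "degree U \<le> M" "coeff U M = 0"
    using assms(3) degree_smult_le[of A ?l] lead_coeff_legendre01_nonzero[OF M]
    by (auto simp: U_def A_def degree_legendre01[OF M] intro!: degree_diff_le)
  hence dU: "degree U < M"
    using M by (metis leading_coeff_0_iff le_neq_implies_less not_one_le_zero degree_0)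
  have P: "P = U + smult A ?l" by (simp add: U_def)
  have "poly U 0 = - A * (-1) ^ M"
    using assms(4) poly_legendre01_0[OF M] by (simp add: U_def)
  note L2 = reference_correction_L2ip[OF M dU this, folded P \<Psi>_def]
  define u X Y where "u = L2ip 0 1 (poly U) (poly U)"
    and "X = A\<^sup>2 * (1 / real M)" and "Y = A\<^sup>2 * (1 / (2 * real M + 1))"
  have "A\<^sup>2 * (63/50 * (1 / (2 * real M + 1)) + 1/20) \<le> A\<^sup>2 * (7/5 * (1 / real M))"
    "A\<^sup>2 * (1 + 2 * (1 / real M)) \<le> A\<^sup>2 * (81 * (1 / (2 * real M + 1)))"
    using reference_correction_constants[of "real M"] M by (intro mult_left_mono; simp)+
  hence XY: "63/50 * Y + A\<^sup>2 / 20 \<le> 7/5 * X" "A\<^sup>2 + 2 * X \<le> 81 * Y"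
    unfolding X_def Y_def by (simp_all only: distrib_left mult.left_commute[of "A\<^sup>2"] mult_1_right)
  have "L2ip 0 1 (poly P) (poly P) = u + Y" "L2ip 0 1 (poly P) (poly \<Psi>) = u + X"
    "L2ip 0 1 (poly \<Psi>) (poly \<Psi>) = u + 2 * X + A\<^sup>2"
    using L2 by (simp_all add: u_def X_def Y_def)
  moreover have "u \<ge> 0" unfolding u_def by (rule L2ip_self_nonneg)
  ultimately have "good_test_on 0 1 (poly P) (poly \<Psi>)"
    using XY unfolding good_test_on_def by (simp add: algebra_simps add_divide_distrib diff_divide_distrib)
  moreover have "degree \<Psi> < M"
    unfolding \<Psi>_def using dU degree_kernel01[OF M] degree_smult_le[of "A / real M" ?k]
    by (intro degree_add_less) auto
  moreover have "poly \<Psi> 1 = poly P 1"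
    using poly_legendre01_1[OF M] poly_kernel01_1[OF M] M by (simp add: \<Psi>_def U_def)
  ultimately show ?thesis by blast
qed

text \<open>The reference point 0 goes to the end point eo, where P vanishes, and 1 to ei.\<close>

lemma element_correction:
  fixes P :: "real poly"
  assumes M: "1 \<le> M" "M \<le> 13" and "c < d" and ends: "(eo = c \<and> ei = d) \<or> (eo = d \<and> ei = c)"
    and "degree P \<le> M" and "poly P eo = 0"
  shows "\<exists>\<Psi>. degree \<Psi> < M \<and> poly \<Psi> ei = poly P ei \<and> good_test_on c d (poly P) (poly \<Psi>)"
proof -
  have io: "ei - eo \<noteq> 0" using ends \<open>c < d\<close> by auto
  define P\<^sub>0 where "P\<^sub>0 = pcompose P [:eo, ei - eo:]"
  have P\<^sub>0: "poly P\<^sub>0 s = poly P (eo + (ei - eo) * s)" for s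
    unfolding P\<^sub>0_def by (simp add: poly_pcompose mult.commute)
  have "degree P\<^sub>0 \<le> M" "poly P\<^sub>0 0 = 0"
    using assms(5,6) io by (simp_all add: P\<^sub>0_def degree_pcompose P\<^sub>0[of 0, unfolded P\<^sub>0_def])
  then obtain Q where Q: "degree Q < M" "poly Q 1 = poly P\<^sub>0 1" "good_test_on 0 1 (poly P\<^sub>0) (poly Q)"
    using reference_correction[OF M] by blast
  define \<Psi> where "\<Psi> = pcompose Q [:- eo / (ei - eo), 1 / (ei - eo):]"
  have \<Psi>: "poly \<Psi> t = poly Q ((t - eo) / (ei - eo))" for t
    unfolding \<Psi>_def by (simp add: poly_pcompose diff_divide_distrib)
  have P: "poly P t = poly P\<^sub>0 ((t - eo) / (ei - eo))" for t
    using io by (simp add: P\<^sub>0)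
  have "degree \<Psi> < M" unfolding \<Psi>_def using Q(1) io by (simp add: degree_pcompose)
  moreover have "poly \<Psi> ei = poly P ei" using Q(2) io by (simp add: \<Psi> P)
  moreover have "good_test_on c d (poly P) (poly \<Psi>)"
    unfolding \<Psi> P by (intro good_test_on_affine Q(3) \<open>c < d\<close> ends continuous_intros)
  ultimately show ?thesis by blast
qed

section \<open>Meshes and piecewise polynomials\<close>

lemma mesh1d_D:
  assumes "mesh1d a b h \<theta> n x" "\<theta> > 0"
  shows "1 \<le> n" "x 0 = a" "x n = b" "\<And>i. i < n \<Longrightarrow> x i < x (Suc i)"
proof -
  show "1 \<le> n" "x 0 = a" "x n = b" using assms unfolding mesh1d_def by auto
  fix i assume "i < n"
  hence "\<theta> * h \<le> x (Suc i) - x i" using assms unfolding mesh1d_def by auto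
  moreover have "\<theta> * h > 0" using assms unfolding mesh1d_def by auto
  ultimately show "x i < x (Suc i)" by simp
qed

lemma mesh1d_mono:
  assumes "mesh1d a b h \<theta> n x" "\<theta> > 0" "i \<le> j" "j \<le> n"
  shows "x i \<le> x j"
proof (rule lift_Suc_mono_le_ivl[where N = "{..<n}"])
  show "x k \<le> x (Suc k)" if "k \<in> {..<n}" for k
    using mesh1d_D(4)[OF assms(1,2)] that by (simp add: less_imp_le)
qed (use assms in auto)

lemma mesh1d_strict_mono:
  assumes "mesh1d a b h \<theta> n x" "\<theta> > 0" "i < j" "j \<le> n"
  shows "x i < x j"
proof (rule lift_Suc_mono_less_ivl[where N = "{..<n}"])
  show "x k < x (Suc k)" if "k \<in> {..<n}" for k
    using mesh1d_D(4)[OF assms(1,2)] that by simp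
qed (use assms in auto)

lemma mesh1d_range:
  assumes "mesh1d a b h \<theta> n x" "\<theta> > 0" "i \<le> n"
  shows "a \<le> x i" "x i \<le> b"
  using mesh1d_mono[OF assms(1,2), of 0 i] mesh1d_mono[OF assms(1,2), of i n] mesh1d_D[OF assms(1,2)] assms(3)
  by auto

lemma mesh1d_cover_halfopen:
  assumes "mesh1d a b h \<theta> n x" "\<theta> > 0" "a \<le> t" "t < b"
  shows "\<exists>i<n. x i \<le> t \<and> t < x (Suc i)"
proof -
  define i where "i = (GREATEST i. i \<le> n \<and> x i \<le> t)"
  have ex: "0 \<le> n \<and> x 0 \<le> t" using mesh1d_D[OF assms(1,2)] assms(3) by simp
  have i: "i \<le> n" "x i \<le> t" and max: "\<And>j. j \<le> n \<Longrightarrow> x j \<le> t \<Longrightarrow> j \<le> i"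
    using GreatestI_nat[of "\<lambda>i. i \<le> n \<and> x i \<le> t" 0 n] Greatest_le_nat[of "\<lambda>i. i \<le> n \<and> x i \<le> t" _ n] ex
    unfolding i_def by auto
  have "i < n" using i mesh1d_D(3)[OF assms(1,2)] assms(4) by (metis le_neq_implies_less not_le)
  moreover have "t < x (Suc i)" using max[of "Suc i"] \<open>i < n\<close> by force
  ultimately show ?thesis using i by blast
qed

definition poly_on :: "nat \<Rightarrow> real \<Rightarrow> real \<Rightarrow> (real \<Rightarrow> real) \<Rightarrow> bool" where
  "poly_on d u v f \<longleftrightarrow> (\<exists>p. degree p \<le> d \<and> (\<forall>t\<in>{u..v}. f t = poly p t))"

lemma poly_onI: "degree p \<le> d \<Longrightarrow> (\<And>t. t \<in> {u..v} \<Longrightarrow> f t = poly p t) \<Longrightarrow> poly_on d u v f"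
  unfolding poly_on_def by blast

lemma poly_on_zero: "poly_on d u v (\<lambda>t. 0)"
  by (rule poly_onI[of 0]) auto

lemma poly_on_add:
  assumes "poly_on d u v f" "poly_on d u v g"
  shows "poly_on d u v (\<lambda>t. f t + g t)"
proof -
  obtain p q where "degree p \<le> d" "\<forall>t\<in>{u..v}. f t = poly p t" "degree q \<le> d" "\<forall>t\<in>{u..v}. g t = poly q t"
    using assms unfolding poly_on_def by blast
  thus ?thesis by (intro poly_onI[of "p + q"] degree_add_le) auto
qed

lemma poly_on_scale:
  assumes "poly_on d u v f"
  shows "poly_on d u v (\<lambda>t. c * f t)"
proof -
  obtain p where "degree p \<le> d" "\<forall>t\<in>{u..v}. f t = poly p t"
    using assms unfolding poly_on_def by blast
  thus ?thesis by (intro poly_onI[of "smult c p"] order.trans[OF degree_smult_le]) auto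
qed

lemma poly_on_continuous:
  assumes "poly_on d u v f"
  shows "continuous_on {u..v} f"
proof -
  obtain p where "\<forall>t\<in>{u..v}. f t = poly p t"
    using assms unfolding poly_on_def by blast
  thus ?thesis using continuous_on_cong[of "{u..v}" "{u..v}" f "poly p"] by (auto intro: continuous_intros)
qed

lemma poly_on_cong: "(\<And>t. t \<in> {u..v} \<Longrightarrow> f t = g t) \<Longrightarrow> poly_on d u v f \<longleftrightarrow> poly_on d u v g"
  unfolding poly_on_def by auto

lemma poly_on_mono: "poly_on d u v f \<Longrightarrow> d \<le> e \<Longrightarrow> poly_on e u v f"
  unfolding poly_on_def by (auto intro: order.trans)

lemma poly_on_poly: "degree p \<le> d \<Longrightarrow> poly_on d u v (poly p)"
  by (rule poly_onI) auto

lemma Ysp_iff: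
  "f \<in> Ysp a b n x M \<longleftrightarrow> (\<forall>t. t \<notin> {a..b} \<longrightarrow> f t = 0) \<and> (\<forall>i<n. poly_on M (x i) (x (Suc i)) f)"
  by (simp add: Ysp_def poly_on_def)

lemma Wt_iff:
  "f \<in> Wt a b n x M \<longleftrightarrow>
     f \<in> Ysp a b n x M \<and> poly_on (M - 1) (x 0) (x 1) f \<and> poly_on (M - 1) (x (n - 1)) (x n) f"
  by (simp add: Wt_def poly_on_def)

lemma Ysp_pieces:
  assumes "f \<in> Ysp a b n x M"
  obtains P where "\<And>i. i < n \<Longrightarrow> degree (P i) \<le> M \<and> (\<forall>t\<in>{x i..x (Suc i)}. f t = poly (P i) t)"
proof -
  have "\<forall>i. \<exists>p. i < n \<longrightarrow> degree p \<le> M \<and> (\<forall>t\<in>{x i..x (Suc i)}. f t = poly p t)"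
    using assms unfolding Ysp_def by blast
  thus ?thesis using choice that by metis
qed

lemma Ysp_continuous:
  assumes "mesh1d a b h \<theta> n x" "\<theta> > 0" "f \<in> Ysp a b n x M"
  shows "continuous_on {a..b} f"
proof -
  have "continuous_on {x 0..x k} f" if "1 \<le> k" "k \<le> n" for k
    using that
  proof (induction k)
    case (Suc k)
    have piece: "continuous_on {x k..x (Suc k)} f"
      using assms(3) Suc.prems by (intro poly_on_continuous[of M]) (auto simp: Ysp_iff)
    show ?case
    proof (cases "k = 0")
      case False
      have "{x 0..x (Suc k)} = {x 0..x k} \<union> {x k..x (Suc k)}"
        using mesh1d_mono[OF assms(1,2), of 0 k] mesh1d_mono[OF assms(1,2), of k "Suc k"] Suc.prems by auto
      thus ?thesis using False Suc by (auto intro: continuous_on_closed_Un piece)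
    qed (use piece in simp)
  qed simp
  thus ?thesis using mesh1d_D[OF assms(1,2)] by force
qed

section \<open>The L2 projection\<close>

interpretation fun_vs: vector_space "\<lambda>(c::real) (f::real \<Rightarrow> real) t. c * f t"
  by unfold_locales (auto simp: fun_eq_iff algebra_simps)

definition Cfun :: "real \<Rightarrow> real \<Rightarrow> (real \<Rightarrow> real) set" where
  "Cfun a b = {f. continuous_on {a..b} f}"

lemma Cfun_subspace: "fun_vs.subspace (Cfun a b)"
  by (rule fun_vs.subspaceI) (auto simp: Cfun_def func_plus func_zero intro!: continuous_intros)

lemma Cfun_lincomb: "f \<in> Cfun a b \<Longrightarrow> g \<in> Cfun a b \<Longrightarrow> (\<lambda>t. c * f t + d * g t) \<in> Cfun a b"
  unfolding Cfun_def by (auto intro!: continuous_intros)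

lemma Cfun_diff: "f \<in> Cfun a b \<Longrightarrow> g \<in> Cfun a b \<Longrightarrow> (\<lambda>t. f t - g t) \<in> Cfun a b"
  unfolding Cfun_def by (auto intro!: continuous_intros)

lemma Cfun_product_integrable: "f \<in> Cfun a b \<Longrightarrow> g \<in> Cfun a b \<Longrightarrow> (\<lambda>t. f t * g t) integrable_on {a..b}"
  unfolding Cfun_def by (auto intro!: integrable_continuous_interval continuous_intros)

lemma L2ip_lincomb_left:
  assumes "f \<in> Cfun a b" "g \<in> Cfun a b" "h \<in> Cfun a b"
  shows "L2ip a b (\<lambda>t. c * f t + d * g t) h = c * L2ip a b f h + d * L2ip a b g h"
proof -
  have "(\<lambda>t. (c * f t + d * g t) * h t) = (\<lambda>t. c * (f t * h t) + d * (g t * h t))"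
    by (auto simp: fun_eq_iff algebra_simps)
  thus ?thesis unfolding L2ip_def
    by (simp only:) (intro integral_unique has_integral_add has_integral_mult_right integrable_integral
        Cfun_product_integrable assms)
qed

lemma L2ip_diff_left:
  assumes "f \<in> Cfun a b" "g \<in> Cfun a b" "h \<in> Cfun a b"
  shows "L2ip a b (\<lambda>t. f t - g t) h = L2ip a b f h - L2ip a b g h"
  using L2ip_lincomb_left[OF assms, of 1 "-1"] by simp

lemma has_integral_L2ip:
  "f \<in> Cfun a b \<Longrightarrow> g \<in> Cfun a b \<Longrightarrow> ((\<lambda>t. f t * g t) has_integral L2ip a b f g) {a..b}"
  unfolding L2ip_def by (intro integrable_integral Cfun_product_integrable)

lemma L2ip_self_eq_0_imp_zero:
  assumes "r \<in> Cfun a b" "L2ip a b r r = 0" "a < b" "t \<in> {a..b}"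
  shows "r t = 0"
proof -
  have "((\<lambda>t. r t * r t) has_integral 0) (cbox a b)"
    using Cfun_product_integrable[OF assms(1,1)] assms(2) unfolding L2ip_def
    by (metis cbox_interval has_integral_integrable_integral)
  hence "r t * r t = 0"
    using assms(1,3,4) unfolding Cfun_def
    by (intro has_integral_0_cbox_imp_0[where f = "\<lambda>t. r t * r t" and a = a and b = b])
       (auto intro!: continuous_intros simp: cbox_interval)
  thus ?thesis by simp
qed

lemma L2ip_eq_0_if_self_eq_0:
  assumes "g \<in> Cfun a b" "r \<in> Cfun a b" "L2ip a b r r = 0"
  shows "L2ip a b g r = 0"
proof (cases "a < b")
  case True
  hence "L2ip a b g r = L2ip a b g (\<lambda>t. 0)"
    using L2ip_self_eq_0_imp_zero[OF assms(2,3)] by (intro L2ip_cong) auto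
  thus ?thesis by (simp add: L2ip_def)
next
  case False
  hence "Henstock_Kurzweil_Integration.content (cbox a b) = 0"
    using content_real_eq_0[of a b] by (simp add: cbox_interval)
  thus ?thesis unfolding L2ip_def cbox_interval[symmetric] by (rule integral_null)
qed

lemma L2ip_orthogonal_span:
  assumes "g \<in> Cfun a b" "B \<subseteq> Cfun a b" "\<forall>v\<in>B. L2ip a b g v = 0"
  shows "\<forall>v\<in>fun_vs.span B. L2ip a b g v = 0"
proof -
  have "fun_vs.subspace {v \<in> Cfun a b. L2ip a b g v = 0}"
  proof (rule fun_vs.subspaceI)
    show "0 \<in> {v \<in> Cfun a b. L2ip a b g v = 0}"
      using Cfun_subspace by (auto simp: fun_vs.subspace_def L2ip_def)
  next
    fix u v assume "u \<in> {v \<in> Cfun a b. L2ip a b g v = 0}" "v \<in> {v \<in> Cfun a b. L2ip a b g v = 0}"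
    thus "u + v \<in> {v \<in> Cfun a b. L2ip a b g v = 0}"
      using L2ip_lincomb_left[of u a b v g 1 1] assms(1) Cfun_lincomb[of u a b v 1 1]
      by (simp add: L2ip_commute[of a b g] func_plus)
  next
    fix c u assume "u \<in> {v \<in> Cfun a b. L2ip a b g v = 0}"
    thus "(\<lambda>t. c * u t) \<in> {v \<in> Cfun a b. L2ip a b g v = 0}"
      using L2ip_lincomb_left[of u a b u g c 0] assms(1) Cfun_lincomb[of u a b u c 0]
      by (simp add: L2ip_commute[of a b g])
  qed
  hence "fun_vs.span B \<subseteq> {v \<in> Cfun a b. L2ip a b g v = 0}"
    using assms(2,3) by (intro fun_vs.span_minimal) auto
  thus ?thesis by auto
qed

lemma L2ip_remove_component:
  assumes "g \<in> Cfun a b" "r \<in> Cfun a b"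
  shows "L2ip a b (\<lambda>t. g t - L2ip a b g r / L2ip a b r r * r t) r = 0"
  using L2ip_lincomb_left[OF assms assms(2), of 1 "- L2ip a b g r / L2ip a b r r"]
    L2ip_eq_0_if_self_eq_0[OF assms]
  by (cases "L2ip a b r r = 0") simp_all

text \<open>Gram-Schmidt: the new vector e is replaced by its residual r with respect to span B.\<close>

lemma exists_orthogonal_projection_span:
  assumes "finite B" "B \<subseteq> Cfun a b" "f \<in> Cfun a b"
  shows "\<exists>w\<in>fun_vs.span B. \<forall>v\<in>B. L2ip a b (\<lambda>t. f t - w t) v = 0"
  using assms
proof (induction B arbitrary: f rule: finite_induct)
  case empty
  show ?case by (intro bexI[of _ 0] fun_vs.span_zero) auto
next
  case (insert e B)
  have B: "B \<subseteq> Cfun a b" and e: "e \<in> Cfun a b" using insert.prems by auto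
  have spanB: "fun_vs.span B \<subseteq> Cfun a b" by (rule fun_vs.span_minimal[OF B Cfun_subspace])
  have sub: "fun_vs.span B \<subseteq> fun_vs.span (insert e B)" by (rule fun_vs.span_mono) auto
  obtain we where we: "we \<in> fun_vs.span B" "\<forall>v\<in>B. L2ip a b (\<lambda>t. e t - we t) v = 0"
    using insert.IH[OF B e] by blast
  obtain wf where wf: "wf \<in> fun_vs.span B" "\<forall>v\<in>B. L2ip a b (\<lambda>t. f t - wf t) v = 0"
    using insert.IH[OF B insert.prems(2)] by blast
  define r where "r = (\<lambda>t. e t - we t)"
  define g where "g = (\<lambda>t. f t - wf t)"
  define c where "c = L2ip a b g r / L2ip a b r r"
  define w where "w = (\<lambda>t. 1 * wf t + c * r t)"
  have C: "we \<in> Cfun a b" "wf \<in> Cfun a b" "r \<in> Cfun a b" "g \<in> Cfun a b"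
    using we(1) wf(1) spanB e insert.prems(2) by (auto simp: r_def g_def intro!: Cfun_diff)
  have r_orth: "L2ip a b r v = 0" and g_orth: "L2ip a b g v = 0" if "v \<in> fun_vs.span B" for v
    using L2ip_orthogonal_span[OF C(3) B] L2ip_orthogonal_span[OF C(4) B] we wf that
    unfolding r_def g_def by blast+
  have fw: "(\<lambda>t. f t - w t) = (\<lambda>t. 1 * g t + (- c) * r t)"
    by (auto simp: w_def g_def)
  have res: "L2ip a b (\<lambda>t. f t - w t) v = L2ip a b g v - c * L2ip a b r v" if "v \<in> Cfun a b" for v
    unfolding fw using L2ip_lincomb_left[OF C(4,3) that, of 1 "- c"] by simp
  have "r \<in> fun_vs.span (insert e B)"
    unfolding r_def using fun_vs.span_diff[OF fun_vs.span_base[of e "insert e B"] subsetD[OF sub we(1)]]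
    by (simp add: fun_diff_def)
  hence "w \<in> fun_vs.span (insert e B)"
    using wf(1) sub fun_vs.span_add[of wf _ "(\<lambda>t. c * r t)"] fun_vs.span_scale[of r _ c]
    by (auto simp: w_def func_plus)
  moreover have "L2ip a b (\<lambda>t. f t - w t) e = 0"
  proof -
    have "w \<in> Cfun a b" unfolding w_def using C by (intro Cfun_lincomb)
    hence d: "(\<lambda>t. f t - w t) \<in> Cfun a b" using insert.prems(2) by (rule Cfun_diff[rotated])
    have "e = (\<lambda>t. 1 * r t + 1 * we t)" by (simp add: r_def)
    hence "L2ip a b e (\<lambda>t. f t - w t) = L2ip a b r (\<lambda>t. f t - w t) + L2ip a b we (\<lambda>t. f t - w t)"
      using L2ip_lincomb_left[OF C(3,1) d, of 1 1] by simp
    hence "L2ip a b (\<lambda>t. f t - w t) e = L2ip a b (\<lambda>t. f t - w t) r + L2ip a b (\<lambda>t. f t - w t) we"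
      by (simp add: L2ip_commute[of a b _ "\<lambda>t. f t - w t"])
    also have "\<dots> = L2ip a b (\<lambda>t. f t - w t) r"
      using res[OF C(1)] r_orth[OF we(1)] g_orth[OF we(1)] by simp
    also have "\<dots> = L2ip a b (\<lambda>t. g t - L2ip a b g r / L2ip a b r r * r t) r"
      by (rule arg_cong[where f = "\<lambda>h. L2ip a b h r"]) (auto simp: w_def g_def c_def fun_eq_iff)
    also have "\<dots> = 0" by (rule L2ip_remove_component[OF C(4,3)])
    finally show ?thesis .
  qed
  moreover have "L2ip a b (\<lambda>t. f t - w t) v = 0" if "v \<in> B" for v
    using res[of v] that B r_orth g_orth fun_vs.span_base[of v B] by auto
  ultimately show ?case by blast
qed

lemma exists_orthogonal_projection:
  assumes V: "fun_vs.subspace V" "V \<subseteq> Cfun a b" and S: "finite S" "V \<subseteq> fun_vs.span S"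
    and f: "f \<in> Cfun a b"
  shows "\<exists>w\<in>V. \<forall>v\<in>V. L2ip a b (\<lambda>t. f t - w t) v = 0"
proof -
  obtain B where B: "B \<subseteq> V" "fun_vs.independent B" "V \<subseteq> fun_vs.span B"
    by (rule fun_vs.basis_exists)
  have "finite B"
    using fun_vs.independent_span_bound[OF S(1) B(2)] B(1) S(2) by auto
  moreover have BC: "B \<subseteq> Cfun a b" using B(1) V(2) by auto
  ultimately obtain w where w: "w \<in> fun_vs.span B" "\<forall>v\<in>B. L2ip a b (\<lambda>t. f t - w t) v = 0"
    using exists_orthogonal_projection_span f by blast
  have "fun_vs.span B \<subseteq> V" by (rule fun_vs.span_minimal[OF B(1) V(1)])
  hence "w \<in> V" using w(1) by blast
  moreover have "\<forall>v\<in>fun_vs.span B. L2ip a b (\<lambda>t. f t - w t) v = 0"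
    using \<open>w \<in> V\<close> V(2) f by (intro L2ip_orthogonal_span[OF _ BC w(2)] Cfun_diff) auto
  ultimately show ?thesis using B(3) by blast
qed

lemma Ysp_subspace: "fun_vs.subspace (Ysp a b n x M)"
  by (rule fun_vs.subspaceI) (auto simp: Ysp_iff func_plus func_zero intro: poly_on_zero poly_on_add poly_on_scale)

lemma Wt_subspace: "fun_vs.subspace (Wt a b n x M)"
proof (rule fun_vs.subspaceI)
  note Y = Ysp_subspace[of a b n x M, unfolded fun_vs.subspace_def]
  show "0 \<in> Wt a b n x M" using Y by (simp add: Wt_iff func_zero poly_on_zero)
  show "f + g \<in> Wt a b n x M" if "f \<in> Wt a b n x M" "g \<in> Wt a b n x M" for f g
    using Y that by (simp add: Wt_iff func_plus poly_on_add)
  show "(\<lambda>t. c * f t) \<in> Wt a b n x M" if "f \<in> Wt a b n x M" for c f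
    using Y that by (simp add: Wt_iff poly_on_scale)
qed

lemma Wt_subset_Ysp: "Wt a b n x M \<subseteq> Ysp a b n x M"
  by (auto simp: Wt_iff)

lemma Ysp_subset_Cfun: "mesh1d a b h \<theta> n x \<Longrightarrow> \<theta> > 0 \<Longrightarrow> Ysp a b n x M \<subseteq> Cfun a b"
  using Ysp_continuous unfolding Cfun_def by blast

definition piece_monomials :: "real \<Rightarrow> nat \<Rightarrow> (nat \<Rightarrow> real) \<Rightarrow> nat \<Rightarrow> (real \<Rightarrow> real) set" where
  "piece_monomials b n x M =
     (\<lambda>(i, k) t. indicator {x i..<x (Suc i)} t * t ^ k) ` ({..<n} \<times> {..M}) \<union> {indicator {b}}"

lemma sum_fun_apply: "(\<Sum>j\<in>J. F j) (t::'a) = (\<Sum>j\<in>J. (F j t :: real))"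
  by (induction J rule: infinite_finite_induct) simp_all

lemma Ysp_eq_sum_pieces:
  assumes m: "mesh1d a b h \<theta> n x" "\<theta> > 0" and f: "f \<in> Ysp a b n x M"
    and P: "\<And>i. i < n \<Longrightarrow> \<forall>t\<in>{x i..x (Suc i)}. f t = poly (P i) t"
  shows "f t = (\<Sum>i<n. indicator {x i..<x (Suc i)} t * poly (P i) t) + f b * indicator {b} t"
proof (cases "a \<le> t \<and> t < b")
  case True
  then obtain j where j: "j < n" "x j \<le> t" "t < x (Suc j)"
    using mesh1d_cover_halfopen[OF m] by blast
  have "indicator {x i..<x (Suc i)} t = (0::real)" if "i < n" "i \<noteq> j" for i
  proof (cases "i < j")
    case True
    thus ?thesis using mesh1d_mono[OF m, of "Suc i" j] j by (simp add: indicator_def)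
  next
    case False
    thus ?thesis using mesh1d_mono[OF m, of "Suc j" i] j that by (simp add: indicator_def)
  qed
  hence "(\<Sum>i<n. indicator {x i..<x (Suc i)} t * poly (P i) t) = poly (P j) t"
    using j by (subst sum.remove[of _ j]) (auto intro!: sum.neutral)
  thus ?thesis using True P[OF j(1)] j by simp
next
  case False
  have "indicator {x i..<x (Suc i)} t = (0::real)" if "i < n" for i
    using mesh1d_range[OF m, of i] mesh1d_range[OF m, of "Suc i"] False that by (auto simp: indicator_def)
  moreover have "a \<le> b" using mesh1d_range[OF m, of 0] mesh1d_D[OF m] by simp
  ultimately show ?thesis using False f by (cases "t = b") (auto simp: Ysp_iff)
qed

lemma Ysp_subset_span:
  assumes m: "mesh1d a b h \<theta> n x" "\<theta> > 0"
  shows "Ysp a b n x M \<subseteq> fun_vs.span (piece_monomials b n x M)"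
proof
  fix f assume f: "f \<in> Ysp a b n x M"
  obtain P where P: "\<And>i. i < n \<Longrightarrow> degree (P i) \<le> M \<and> (\<forall>t\<in>{x i..x (Suc i)}. f t = poly (P i) t)"
    using Ysp_pieces[OF f] by blast
  let ?g = "(\<Sum>i<n. \<Sum>k\<le>M. (\<lambda>t. coeff (P i) k * (indicator {x i..<x (Suc i)} t * t ^ k))) + (\<lambda>t. f b * indicator {b} t)"
  have "?g \<in> fun_vs.span (piece_monomials b n x M)"
    by (intro fun_vs.span_add fun_vs.span_sum fun_vs.span_scale fun_vs.span_base)
       (auto simp: piece_monomials_def)
  moreover have "f = ?g"
  proof
    fix t
    have "?g t = (\<Sum>i<n. \<Sum>k\<le>M. coeff (P i) k * (indicator {x i..<x (Suc i)} t * t ^ k))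
        + f b * indicator {b} t"
      by (simp add: sum_fun_apply)
    also have "\<dots> = (\<Sum>i<n. indicator {x i..<x (Suc i)} t * poly (P i) t) + f b * indicator {b} t"
    proof (intro arg_cong2[where f = "(+)"] sum.cong refl)
      fix i assume "i \<in> {..<n}"
      hence "poly (P i) t = (\<Sum>k\<le>M. coeff (P i) k * t ^ k)"
        using poly_eq_sum_lessThan[of "P i" "Suc M" t] P[of i] by (simp add: lessThan_Suc_atMost)
      thus "(\<Sum>k\<le>M. coeff (P i) k * (indicator {x i..<x (Suc i)} t * t ^ k))
          = indicator {x i..<x (Suc i)} t * poly (P i) t"
        by (simp add: sum_distrib_left mult.left_commute)
    qed
    also have "\<dots> = f t" by (rule Ysp_eq_sum_pieces[OF m f, symmetric]) (use P in blast)
    finally show "f t = ?g t" by simp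
  qed
  ultimately show "f \<in> fun_vs.span (piece_monomials b n x M)" by simp
qed

lemma orthogonal_projection_unique:
  assumes V: "fun_vs.subspace V" "V \<subseteq> Cfun a b" and "a < b"
    and zero: "\<forall>v\<in>V. \<forall>t. t \<notin> {a..b} \<longrightarrow> v t = 0" and f: "f \<in> Cfun a b"
    and w: "w \<in> V" "\<forall>v\<in>V. L2ip a b (\<lambda>t. f t - w t) v = 0"
    and w': "w' \<in> V" "\<forall>v\<in>V. L2ip a b (\<lambda>t. f t - w' t) v = 0"
  shows "w' = w"
proof
  fix t
  define d where "d = (\<lambda>t. w t - w' t)"
  have "d \<in> V"
    using fun_vs.subspace_diff[OF V(1) w(1) w'(1)] unfolding d_def fun_diff_def .
  hence dC: "d \<in> Cfun a b" using V(2) by auto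
  have "(\<lambda>t. f t - w' t) \<in> Cfun a b" "(\<lambda>t. f t - w t) \<in> Cfun a b"
    using f w(1) w'(1) V(2) by (auto intro!: Cfun_diff)
  from L2ip_diff_left[OF this dC]
  have "L2ip a b d d = L2ip a b (\<lambda>t. f t - w' t) d - L2ip a b (\<lambda>t. f t - w t) d"
    by (simp add: d_def)
  hence "L2ip a b d d = 0" using w(2) w'(2) \<open>d \<in> V\<close> by simp
  show "w' t = w t"
  proof (cases "t \<in> {a..b}")
    case True
    thus ?thesis using L2ip_self_eq_0_imp_zero[OF dC \<open>L2ip a b d d = 0\<close> \<open>a < b\<close>] by (simp add: d_def)
  next
    case False
    hence "w t = 0" "w' t = 0" using zero w(1) w'(1) by blast+
    thus ?thesis by simp
  qed
qed

lemma L2proj_orthogonal: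
  assumes m: "mesh1d a b h \<theta> n x" "\<theta> > 0" and "a < b" and f: "f \<in> Cfun a b"
  shows "L2proj a b n x M f \<in> Wt a b n x M"
    and "\<forall>v\<in>Wt a b n x M. L2ip a b (\<lambda>t. f t - L2proj a b n x M f t) v = 0"
proof -
  let ?W = "Wt a b n x M"
  have WC: "?W \<subseteq> Cfun a b" using Wt_subset_Ysp Ysp_subset_Cfun[OF m] by blast
  have zero: "\<forall>v\<in>?W. \<forall>t. t \<notin> {a..b} \<longrightarrow> v t = 0"
  proof (intro ballI allI impI)
    fix v t assume "v \<in> ?W" "t \<notin> {a..b}"
    moreover from \<open>v \<in> ?W\<close> have "v \<in> Ysp a b n x M" using Wt_subset_Ysp by blast
    ultimately show "v t = 0" unfolding Ysp_iff by blast
  qed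
  have "finite (piece_monomials b n x M)" by (simp add: piece_monomials_def)
  moreover have "?W \<subseteq> fun_vs.span (piece_monomials b n x M)"
    using Wt_subset_Ysp Ysp_subset_span[OF m] by blast
  ultimately obtain w where w: "w \<in> ?W" "\<forall>v\<in>?W. L2ip a b (\<lambda>t. f t - w t) v = 0"
    using exists_orthogonal_projection[OF Wt_subspace WC _ _ f] by blast
  have "L2proj a b n x M f = w"
    unfolding L2proj_def
    by (rule the_equality) (use w orthogonal_projection_unique[OF Wt_subspace WC \<open>a < b\<close> zero f w] in blast)+
  thus "L2proj a b n x M f \<in> ?W" "\<forall>v\<in>?W. L2ip a b (\<lambda>t. f t - L2proj a b n x M f t) v = 0"
    using w by simp_all
qed

section \<open>Construction of the test function\<close>

text \<open>Expand 0 \<le> |10 w - 5 eta + psi|^2 and use <eta,w> = <w,w>.\<close>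

lemma L2ip_plus_projection_lower_bound:
  assumes C: "\<eta> \<in> Cfun a b" "w \<in> Cfun a b" "\<psi> \<in> Cfun a b"
    and orth: "L2ip a b (\<lambda>t. \<eta> t - w t) w = 0"
  shows "3/2 * L2ip a b \<eta> \<psi> - 5/4 * L2ip a b \<eta> \<eta> - L2ip a b \<psi> \<psi> / 20 \<le> L2ip a b (\<lambda>t. \<eta> t + w t) \<psi>"
proof -
  have sq: "(\<lambda>t. (10 * w t - 5 * \<eta> t + \<psi> t)\<^sup>2) = (\<lambda>t. 100 * (w t * w t) - 100 * (\<eta> t * w t) + 20 * (w t * \<psi> t)
      + 25 * (\<eta> t * \<eta> t) - 10 * (\<eta> t * \<psi> t) + \<psi> t * \<psi> t)"
    by (simp add: fun_eq_iff power2_eq_square algebra_simps)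
  have "((\<lambda>t. 100 * (w t * w t) - 100 * (\<eta> t * w t) + 20 * (w t * \<psi> t) + 25 * (\<eta> t * \<eta> t)
      - 10 * (\<eta> t * \<psi> t) + \<psi> t * \<psi> t) has_integral
      100 * L2ip a b w w - 100 * L2ip a b \<eta> w + 20 * L2ip a b w \<psi> + 25 * L2ip a b \<eta> \<eta>
      - 10 * L2ip a b \<eta> \<psi> + L2ip a b \<psi> \<psi>) {a..b}"
    by (intro has_integral_add has_integral_diff has_integral_mult_right has_integral_L2ip C)
  hence "0 \<le> 100 * L2ip a b w w - 100 * L2ip a b \<eta> w + 20 * L2ip a b w \<psi> + 25 * L2ip a b \<eta> \<eta>
      - 10 * L2ip a b \<eta> \<psi> + L2ip a b \<psi> \<psi>"
    unfolding sq[symmetric] by (rule has_integral_nonneg) simp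
  moreover have "L2ip a b \<eta> w = L2ip a b w w"
    using orth L2ip_diff_left[OF C(1,2,2)] by simp
  moreover have "L2ip a b (\<lambda>t. \<eta> t + w t) \<psi> = L2ip a b \<eta> \<psi> + L2ip a b w \<psi>"
    using L2ip_lincomb_left[OF C, of 1 1] by simp
  ultimately show ?thesis by linarith
qed

lemma good_test_on_inf_sup:
  assumes "good_test_on a b \<eta> \<psi>" "\<eta> \<in> Cfun a b" "w \<in> Cfun a b" "\<psi> \<in> Cfun a b"
    and "L2ip a b (\<lambda>t. \<eta> t - w t) w = 0"
  shows "1/100 * (L2norm a b \<eta>)\<^sup>2 \<le> L2ip a b (\<lambda>t. \<eta> t + w t) \<psi>"
    and "L2norm a b \<psi> \<le> 9 * L2norm a b \<eta>"
proof -
  have norm: "(L2norm a b \<eta>)\<^sup>2 = L2ip a b \<eta> \<eta>"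
    unfolding L2norm_def using L2ip_self_nonneg[of a b \<eta>] by simp
  show "1/100 * (L2norm a b \<eta>)\<^sup>2 \<le> L2ip a b (\<lambda>t. \<eta> t + w t) \<psi>"
    using L2ip_plus_projection_lower_bound[OF assms(2-5)] assms(1) unfolding norm good_test_on_def
    by linarith
  have "L2norm a b \<psi> \<le> sqrt (81 * L2ip a b \<eta> \<eta>)"
    unfolding L2norm_def using assms(1) good_test_on_def real_sqrt_le_mono by blast
  thus "L2norm a b \<psi> \<le> 9 * L2norm a b \<eta>"
    by (simp add: L2norm_def real_sqrt_mult)
qed

text \<open>For m = 1 the first and the last element coincide, and the first branch wins.\<close>

definition end_splice ::
  "real \<Rightarrow> real \<Rightarrow> nat \<Rightarrow> (nat \<Rightarrow> real) \<Rightarrow> real poly \<Rightarrow> real poly \<Rightarrow> (real \<Rightarrow> real) \<Rightarrow> real \<Rightarrow> real" where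
  "end_splice a b m y QL QR \<eta> t =
     (if t \<in> {a..y 1} then poly QL t else if t \<in> {y (m - 1)..b} then poly QR t else \<eta> t)"

context
  fixes a b h \<theta> :: real and m M :: nat and y :: "nat \<Rightarrow> real" and \<eta> :: "real \<Rightarrow> real" and QL QR :: "real poly"
  assumes mesh: "mesh1d a b h \<theta> m y" "\<theta> > 0"
    and \<eta>: "\<eta> \<in> Ysp a b m y M"
    and QL: "degree QL < M" "poly QL (y 1) = \<eta> (y 1)"
    and QR: "degree QR < M" "poly QR (y (m - 1)) = \<eta> (y (m - 1))"
begin

private lemma mesh_nodes:
  "1 \<le> m" "y 0 = a" "y m = b" "a < y 1" "y 1 \<le> b" "a \<le> y (m - 1)" "y (m - 1) < b"
  "2 \<le> m \<Longrightarrow> y 1 \<le> y (m - 1)"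
  using mesh1d_D[OF mesh] mesh1d_strict_mono[OF mesh, of 0 1] mesh1d_strict_mono[OF mesh, of "m - 1" m]
    mesh1d_range[OF mesh, of 1] mesh1d_range[OF mesh, of "m - 1"] mesh1d_mono[OF mesh, of 1 "m - 1"]
  by auto

lemma end_splice_left: "t \<in> {a..y 1} \<Longrightarrow> end_splice a b m y QL QR \<eta> t = poly QL t"
  by (simp add: end_splice_def)

lemma end_splice_right:
  assumes "2 \<le> m" "t \<in> {y (m - 1)..b}"
  shows "end_splice a b m y QL QR \<eta> t = poly QR t"
proof (cases "t \<in> {a..y 1}")
  case True
  hence "t = y 1" "y 1 = y (m - 1)" using assms mesh_nodes(8) by auto
  thus ?thesis using True QL(2) QR(2) by (simp add: end_splice_def)
qed (use assms in \<open>auto simp: end_splice_def\<close>)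

lemma end_splice_middle:
  assumes "t \<in> {y 1..y (m - 1)}"
  shows "end_splice a b m y QL QR \<eta> t = \<eta> t"
proof -
  have "t = y 1" if "t \<in> {a..y 1}" using that assms by auto
  moreover have "t = y (m - 1)" if "t \<in> {y (m - 1)..b}" using that assms by auto
  ultimately show ?thesis using QL(2) QR(2) by (auto simp: end_splice_def)
qed

lemma end_splice_outside: "t \<notin> {a..b} \<Longrightarrow> end_splice a b m y QL QR \<eta> t = \<eta> t"
  using mesh_nodes(5,6) by (auto simp: end_splice_def)

lemma end_splice_in_Wt: "end_splice a b m y QL QR \<eta> \<in> Wt a b m y M"
proof -
  let ?\<psi> = "end_splice a b m y QL QR \<eta>"
  have first: "poly_on (M - 1) (y 0) (y 1) ?\<psi>"
    using QL(1) mesh_nodes(2) by (subst poly_on_cong[of _ _ _ "poly QL"]) (auto simp: end_splice_left intro: poly_on_poly)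
  have last: "poly_on (M - 1) (y (m - 1)) (y m) ?\<psi>"
  proof (cases "2 \<le> m")
    case True
    thus ?thesis using QR(1) mesh_nodes(3)
      by (subst poly_on_cong[of _ _ _ "poly QR"]) (auto simp: end_splice_right intro: poly_on_poly)
  next
    case False
    hence "m = 1" using mesh_nodes(1) by simp
    thus ?thesis using first by simp
  qed
  have "poly_on M (y i) (y (Suc i)) ?\<psi>" if i: "i < m" for i
  proof -
    consider "i = 0" | "i = m - 1" "1 \<le> i" | "1 \<le> i" "Suc i \<le> m - 1"
      using i by (cases "i = 0"; cases "i = m - 1") auto
    thus ?thesis
    proof cases
      case 1 thus ?thesis using poly_on_mono[OF first] by simp
    next
      case 2 thus ?thesis using poly_on_mono[OF last] mesh_nodes(1) by simp
    next
      case 3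
      hence "y 1 \<le> y i" "y (Suc i) \<le> y (m - 1)" using mesh1d_mono[OF mesh] i by auto
      hence "poly_on M (y i) (y (Suc i)) ?\<psi> \<longleftrightarrow> poly_on M (y i) (y (Suc i)) \<eta>"
        by (intro poly_on_cong end_splice_middle) auto
      thus ?thesis using \<eta> i by (simp add: Ysp_iff)
    qed
  qed
  moreover have "?\<psi> t = 0" if "t \<notin> {a..b}" for t
    using end_splice_outside[OF that] \<eta> that by (simp add: Ysp_iff)
  ultimately show ?thesis using first last by (simp add: Wt_iff Ysp_iff)
qed

lemma good_test_on_end_splice:
  assumes "good_test_on a (y 1) \<eta> (poly QL)" and "2 \<le> m \<Longrightarrow> good_test_on (y (m - 1)) b \<eta> (poly QR)"
  shows "good_test_on a b \<eta> (end_splice a b m y QL QR \<eta>)"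
proof -
  let ?\<psi> = "end_splice a b m y QL QR \<eta>"
  have left: "good_test_on a (y 1) \<eta> ?\<psi>"
    using assms(1) by (subst good_test_on_cong[OF refl end_splice_left]) auto
  show ?thesis
  proof (cases "2 \<le> m")
    case False
    hence "m = 1" using mesh_nodes(1) by simp
    thus ?thesis using left mesh_nodes(3) by simp
  next
    case True
    have C: "continuous_on {a..b} \<eta>" "continuous_on {a..b} ?\<psi>"
      using Ysp_continuous[OF mesh] \<eta> end_splice_in_Wt Wt_subset_Ysp by blast+
    have "good_test_on (y 1) (y (m - 1)) \<eta> ?\<psi>"
      using good_test_on_refl by (subst good_test_on_cong[OF refl end_splice_middle]) auto
    moreover have "good_test_on (y (m - 1)) b \<eta> ?\<psi>"
      using assms(2)[OF True] by (subst good_test_on_cong[OF refl end_splice_right[OF True]]) auto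
    ultimately show ?thesis
      using left C mesh_nodes True
      by (intro good_test_on_combine[of a b _ _ "y (m - 1)"] good_test_on_combine[of a "y (m - 1)" _ _ "y 1"])
         (auto elim!: continuous_on_subset)
  qed
qed

end

lemma exists_good_test:
  assumes M: "1 \<le> M" "M \<le> 13" and mesh: "mesh1d a b h \<theta> m y" "\<theta> > 0"
    and \<eta>: "\<eta> \<in> Ysp a b m y M" "\<eta> a = 0" "\<eta> b = 0"
  shows "\<exists>\<psi>\<in>Wt a b m y M. good_test_on a b \<eta> \<psi>"
proof -
  obtain P where P: "\<And>i. i < m \<Longrightarrow> degree (P i) \<le> M \<and> (\<forall>t\<in>{y i..y (Suc i)}. \<eta> t = poly (P i) t)"
    using Ysp_pieces[OF \<eta>(1)] by blast
  have m: "1 \<le> m" "y 0 = a" "y m = b" using mesh1d_D[OF mesh] by auto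
  have "a < y 1" "y (m - 1) < b"
    using mesh1d_strict_mono[OF mesh, of 0 1] mesh1d_strict_mono[OF mesh, of "m - 1" m] m by auto
  have PL: "degree (P 0) \<le> M" "\<And>t. t \<in> {a..y 1} \<Longrightarrow> \<eta> t = poly (P 0) t"
    and PR: "degree (P (m - 1)) \<le> M" "\<And>t. t \<in> {y (m - 1)..b} \<Longrightarrow> \<eta> t = poly (P (m - 1)) t"
    using P[of 0] P[of "m - 1"] m by auto
  obtain QL where QL: "degree QL < M" "poly QL (y 1) = poly (P 0) (y 1)"
    "good_test_on a (y 1) (poly (P 0)) (poly QL)"
    using element_correction[OF M \<open>a < y 1\<close>, of a "y 1" "P 0"] PL \<eta>(2) \<open>a < y 1\<close> by auto
  obtain QR where QR: "degree QR < M" "poly QR (y (m - 1)) = poly (P (m - 1)) (y (m - 1))"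
    "good_test_on (y (m - 1)) b (poly (P (m - 1))) (poly QR)"
    using element_correction[OF M \<open>y (m - 1) < b\<close>, of b "y (m - 1)" "P (m - 1)"] PR \<eta>(3) \<open>y (m - 1) < b\<close>
    by auto
  have QL': "poly QL (y 1) = \<eta> (y 1)" "good_test_on a (y 1) \<eta> (poly QL)"
    using QL PL(2)[of "y 1"] \<open>a < y 1\<close> good_test_on_cong[of a "y 1" \<eta> "poly (P 0)"] PL(2) by auto
  have QR': "poly QR (y (m - 1)) = \<eta> (y (m - 1))" "good_test_on (y (m - 1)) b \<eta> (poly QR)"
    using QR PR(2)[of "y (m - 1)"] \<open>y (m - 1) < b\<close> good_test_on_cong[of "y (m - 1)" b \<eta> "poly (P (m - 1))"] PR(2)
    by auto
  show ?thesis
    using end_splice_in_Wt[OF mesh \<eta>(1) QL(1) QL'(1) QR(1) QR'(1)]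
      good_test_on_end_splice[OF mesh \<eta>(1) QL(1) QL'(1) QR(1) QR'(1) QL'(2) QR'(2)] by blast
qed

theorem lemma4:
  fixes M :: nat
  assumes "1 \<le> M" and "M \<le> 13"
  shows "\<forall>\<theta>>0. \<exists>c1>0. \<exists>c2>0. \<forall>(a::real) (b::real) (h::real) (n::nat) (m::nat)
           (x::nat \<Rightarrow> real) (y::nat \<Rightarrow> real) (\<eta>::real \<Rightarrow> real).
     a < b \<and> mesh1d a b h \<theta> n x \<and> mesh1d a b h \<theta> m y \<and>
     \<eta> \<in> Ysp a b m y M \<and> \<eta> a = 0 \<and> \<eta> b = 0 \<longrightarrow>
     (\<exists>\<psi>\<in>Wt a b m y M.
        L2ip a b (\<lambda>t. \<eta> t + L2proj a b n x M \<eta> t) \<psi> \<ge> c1 * (L2norm a b \<eta>)\<^sup>2 \<and>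
        L2norm a b \<psi> \<le> c2 * L2norm a b \<eta>)"
proof (intro allI impI, rule exI[of _ "1/100"], rule conjI, simp, rule exI[of _ 9], rule conjI, simp,
    intro allI impI)
  fix \<theta> a b h :: real and n m :: nat and x y :: "nat \<Rightarrow> real" and \<eta> :: "real \<Rightarrow> real"
  assume "\<theta> > 0" and "a < b \<and> mesh1d a b h \<theta> n x \<and> mesh1d a b h \<theta> m y \<and>
    \<eta> \<in> Ysp a b m y M \<and> \<eta> a = 0 \<and> \<eta> b = 0"
  hence \<theta>: "\<theta> > 0" and "a < b" and x: "mesh1d a b h \<theta> n x" and y: "mesh1d a b h \<theta> m y"
    and \<eta>: "\<eta> \<in> Ysp a b m y M" "\<eta> a = 0" "\<eta> b = 0" by auto
  obtain \<psi> where \<psi>: "\<psi> \<in> Wt a b m y M" "good_test_on a b \<eta> \<psi>"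
    using exists_good_test[OF assms y \<theta> \<eta>] by blast
  have C: "\<eta> \<in> Cfun a b" "\<psi> \<in> Cfun a b"
    using \<eta>(1) \<psi>(1) Wt_subset_Ysp Ysp_subset_Cfun[OF y \<theta>] by blast+
  note proj = L2proj_orthogonal[OF x \<theta> \<open>a < b\<close> C(1), of M]
  have "L2proj a b n x M \<eta> \<in> Cfun a b"
    using proj(1) Wt_subset_Ysp Ysp_subset_Cfun[OF x \<theta>] by blast
  thus "\<exists>\<psi>\<in>Wt a b m y M. L2ip a b (\<lambda>t. \<eta> t + L2proj a b n x M \<eta> t) \<psi> \<ge> 1/100 * (L2norm a b \<eta>)\<^sup>2 \<and>
      L2norm a b \<psi> \<le> 9 * L2norm a b \<eta>"
    using good_test_on_inf_sup[OF \<psi>(2) C(1) _ C(2)] proj \<psi>(1) by blast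
qed

end
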